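(* Consider the sub-$\ell^\infty$ structure on $\mathbb{R}^2$ defined by $Y_1=\partial_x+x\partial_y$, $Y_2=\partial_x-x\partial_y$. If an extremal pair $(\lambda,\gamma)$ on $[0,T]$ has a regular arc, then $\gamma$ is a regular bang-bang trajectory. Moreover, there is $s>0$ such that all its arcs have length (duration) $s$, except possibly the first and the last arc, whose lengths are at most $s$. At consecutive junctions between regular arcs, the components $u_1$ and $u_2$ of the control change sign alternately.
   Context: Sub-$\ell^\infty$ structure defined by smooth vector fields $X_1,\dots,X_k$ on a manifold $M$ (here $X_1=Y_1$, $X_2=Y_2$): an admissible trajectory is an absolutely continuous curve $\gamma:[0,T]\to M$ together with a measurable control $u=(u_1,\dots,u_k):[0,T]\to\mathbb{R}^k$ with $|u_i(t)|\le1$ for all $i$ and a.e. $t$, such that $\dot\gamma(t)=\sum_i u_i(t)X_i(\gamma(t))$ for a.e. $t$. An extremal pair is a pair $(\lambda,\gamma)$ where $\gamma$ is admissible with control $u$ and $\lambda:[0,T]\to T^*M$ is absolutely continuous with $\lambda(t)\in T^*_{\gamma(t)}M\setminus\{0\}$, such that, with $\mathcal H(\lambda,p,u)=\sum_i u_i\langle\lambda,X_i(p)\rangle$, in canonical coordinates $\dot\lambda=-\partial_p\mathcal H(\lambda,\gamma,u)$, $\dot\gamma=\partial_\lambda\mathcal H(\lambda,\gamma,u)$ a.e., and there is a constant $\lambda_0\ge0$ with $\sum_iu_i(t)\langle\lambda(t),X_i(\gamma(t))\rangle=\sum_i|\langle\lambda(t),X_i(\gamma(t))\rangle|=\lambda_0$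 for a.e. $t$; $\gamma$ is then an extremal trajectory and $\lambda$ an extremal lift. The switching functions are $\varphi_j(t)=\langle\lambda(t),X_j(\gamma(t))\rangle$. The restriction of an extremal pair to an open interval $I$ is a regular arc if $\varphi_j(t)\ne0$ for all $t\in I$ and all $j$; arcs are taken maximal (not contained in a strictly larger open interval with the same property). A regular bang-bang trajectory is an extremal trajectory with an extremal lift such that $[0,T]$ minus finitely many points is a finite union of maximal regular arcs (on each of which the control is then constant with values in $\{1,-1\}^k$); these are its arcs. *)

theory Defs
  imports "HOL-Analysis.Analysis"
begin

text \<open>Points of the manifold M = R^2 are pairs (x,y); covectors at a point are pairs
  (l_x, l_y) acting on tangent vectors by the inner product (canonical coordinates).\<close>

definition Yfield :: "nat \<Rightarrow> real \<times> real \<Rightarrow> real \<times> real" where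
  "Yfield i p = (if i = 1 then (1, fst p) else (1, - fst p))"

definition ucomp :: "nat \<Rightarrow> real \<times> real \<Rightarrow> real" where
  "ucomp i w = (if i = 1 then fst w else snd w)"

definition pairing :: "real \<times> real \<Rightarrow> real \<times> real \<Rightarrow> real" where
  "pairing l v = fst l * fst v + snd l * snd v"

definition Ham :: "real \<times> real \<Rightarrow> real \<times> real \<Rightarrow> real \<times> real \<Rightarrow> real" where
  "Ham l p w = (\<Sum>i\<in>{1,2}. ucomp i w * pairing l (Yfield i p))"

definition dHdp :: "real \<times> real \<Rightarrow> real \<times> real \<Rightarrow> real \<times> real \<Rightarrow> real \<times> real" where
  "dHdp l p w = (deriv (%s. Ham l (s, snd p) w) (fst p),
                 deriv (%s. Ham l (fst p, s) w) (snd p))"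

definition dHdl :: "real \<times> real \<Rightarrow> real \<times> real \<Rightarrow> real \<times> real \<Rightarrow> real \<times> real" where
  "dHdl l p w = (deriv (%s. Ham (s, snd l) p w) (fst l),
                 deriv (%s. Ham (fst l, s) p w) (snd l))"

definition abs_continuous_on :: "real \<Rightarrow> real \<Rightarrow> (real \<Rightarrow> 'a::real_normed_vector) \<Rightarrow> bool" where
  "abs_continuous_on a b f \<longleftrightarrow>
     (\<forall>\<epsilon>>0. \<exists>\<delta>>0. \<forall>(n::nat) (c::nat \<Rightarrow> real) (d::nat \<Rightarrow> real).
        (\<forall>i<n. a \<le> c i \<and> c i \<le> d i \<and> d i \<le> b) \<and>
        (\<forall>i<n. \<forall>j<n. i \<noteq> j \<longrightarrow> d i \<le> c j \<or> d j \<le> c i) \<and>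
        (\<Sum>i<n. d i - c i) < \<delta>
        \<longrightarrow> (\<Sum>i<n. norm (f (d i) - f (c i))) < \<epsilon>)"

definition admissible :: "real \<Rightarrow> (real \<Rightarrow> real \<times> real) \<Rightarrow> (real \<Rightarrow> real \<times> real) \<Rightarrow> bool" where
  "admissible T \<gamma> u \<longleftrightarrow>
     abs_continuous_on 0 T \<gamma> \<and>
     u \<in> borel_measurable (lebesgue_on {0..T}) \<and>
     (AE t in lborel. t \<in> {0..T} \<longrightarrow> (\<forall>i\<in>{1,2}. \<bar>ucomp i (u t)\<bar> \<le> 1)) \<and>
     (AE t in lborel. t \<in> {0..T} \<longrightarrow>
        (\<gamma> has_vector_derivative (\<Sum>i\<in>{1,2}. ucomp i (u t) *\<^sub>R Yfield i (\<gamma> t))) (at t))"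

definition extremal_pair :: "real \<Rightarrow> (real \<Rightarrow> real \<times> real) \<Rightarrow> (real \<Rightarrow> real \<times> real)
     \<Rightarrow> (real \<Rightarrow> real \<times> real) \<Rightarrow> bool" where
  "extremal_pair T lam \<gamma> u \<longleftrightarrow>
     admissible T \<gamma> u \<and>
     abs_continuous_on 0 T lam \<and>
     (\<forall>t\<in>{0..T}. lam t \<noteq> 0) \<and>
     (AE t in lborel. t \<in> {0..T} \<longrightarrow>
        (lam has_vector_derivative - dHdp (lam t) (\<gamma> t) (u t)) (at t) \<and>
        (\<gamma> has_vector_derivative dHdl (lam t) (\<gamma> t) (u t)) (at t)) \<and>
     (\<exists>lam0\<ge>0. AE t in lborel. t \<in> {0..T} \<longrightarrow>
        (\<Sum>i\<in>{1,2}. ucomp i (u t) * pairing (lam t) (Yfield i (\<gamma> t))) =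
          (\<Sum>i\<in>{1,2}. \<bar>pairing (lam t) (Yfield i (\<gamma> t))\<bar>) \<and>
        (\<Sum>i\<in>{1,2}. \<bar>pairing (lam t) (Yfield i (\<gamma> t))\<bar>) = lam0)"

definition switching :: "(real \<Rightarrow> real \<times> real) \<Rightarrow> (real \<Rightarrow> real \<times> real) \<Rightarrow> nat \<Rightarrow> real \<Rightarrow> real" where
  "switching lam \<gamma> j t = pairing (lam t) (Yfield j (\<gamma> t))"

definition regular_interval :: "real \<Rightarrow> (real \<Rightarrow> real \<times> real) \<Rightarrow> (real \<Rightarrow> real \<times> real)
     \<Rightarrow> real \<Rightarrow> real \<Rightarrow> bool" where
  "regular_interval T lam \<gamma> a b \<longleftrightarrow>
     0 \<le> a \<and> a < b \<and> b \<le> T \<and>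
     (\<forall>t\<in>{a<..<b}. \<forall>j\<in>{1,2}. switching lam \<gamma> j t \<noteq> 0)"

definition regular_arc :: "real \<Rightarrow> (real \<Rightarrow> real \<times> real) \<Rightarrow> (real \<Rightarrow> real \<times> real)
     \<Rightarrow> real \<Rightarrow> real \<Rightarrow> bool" where
  "regular_arc T lam \<gamma> a b \<longleftrightarrow>
     regular_interval T lam \<gamma> a b \<and>
     (\<forall>a' b'. regular_interval T lam \<gamma> a' b' \<and> {a<..<b} \<subseteq> {a'<..<b'} \<longrightarrow> a' = a \<and> b' = b)"

definition regular_bang_bang :: "real \<Rightarrow> (real \<Rightarrow> real \<times> real) \<Rightarrow> (real \<Rightarrow> real \<times> real) \<Rightarrow> bool" where
  "regular_bang_bang T lam \<gamma> \<longleftrightarrow>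
     (\<exists>F A. finite F \<and> finite A \<and>
        (\<forall>(a,b)\<in>A. regular_arc T lam \<gamma> a b) \<and>
        {0..T} - F = (\<Union>(a,b)\<in>A. {a<..<b}))"

definition junction :: "real \<Rightarrow> (real \<Rightarrow> real \<times> real) \<Rightarrow> (real \<Rightarrow> real \<times> real) \<Rightarrow> real \<Rightarrow> bool" where
  "junction T lam \<gamma> t \<longleftrightarrow> (\<exists>a b. regular_arc T lam \<gamma> a t \<and> regular_arc T lam \<gamma> t b)"

definition switches_only :: "real \<Rightarrow> (real \<Rightarrow> real \<times> real) \<Rightarrow> (real \<Rightarrow> real \<times> real)
     \<Rightarrow> (real \<Rightarrow> real \<times> real) \<Rightarrow> nat \<Rightarrow> real \<Rightarrow> bool" where
  "switches_only T lam \<gamma> u i t \<longleftrightarrow>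
     (\<forall>a b. regular_arc T lam \<gamma> a t \<and> regular_arc T lam \<gamma> t b \<longrightarrow>
        (\<exists>\<sigma>\<in>{-1,1::real}.
           (AE s in lborel. s \<in> {a<..<t} \<longrightarrow> ucomp i (u s) = \<sigma>) \<and>
           (AE s in lborel. s \<in> {t<..<b} \<longrightarrow> ucomp i (u s) = - \<sigma>)) \<and>
        (\<exists>\<rho>\<in>{-1,1::real}.
           (AE s in lborel. s \<in> {a<..<b} \<longrightarrow> ucomp (3 - i) (u s) = \<rho>)))"

end

theory Submission
  imports Defs
begin

text \<open>Along the extremal the costate component \<open>py = snd \<lambda>\<close> is conserved, and the maximized
  Hamiltonian \<open>\<bar>\<phi>\<^sub>1\<bar> + \<bar>\<phi>\<^sub>2\<bar>\<close> is a constant \<open>level > 0\<close>. Where \<open>\<phi>\<^sub>j\<close> does not vanish,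
  \<open>u\<^sub>j = sgn \<phi>\<^sub>j\<close> is constant, and the adjoint equation makes the other switching function affine
  with slope \<open>\<plusminus>2 py\<close>. Hence the zeros of \<open>\<phi>\<^sub>1\<close> and \<open>\<phi>\<^sub>2\<close> are isolated, so there are finitely
  many, and they cut \<open>[0,T]\<close> into the regular arcs. On an interior arc one switching function runs
  from \<open>0\<close> to \<open>\<plusminus>level\<close> with slope \<open>\<plusminus>2 py\<close>, so every interior arc has length
  \<open>level / (2 \<bar>py\<bar>)\<close>. At a junction only the vanishing switching function changes sign, and since it
  cannot vanish again on the next arc, the next junction is a zero of the other one.\<close>

section \<open>Absolutely continuous functions\<close>

definition nonoverlapping_subintervals :: "real \<Rightarrow> real \<Rightarrow> nat \<Rightarrow> (nat \<Rightarrow> real) \<Rightarrow> (nat \<Rightarrow> real) \<Rightarrow> bool" where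
  "nonoverlapping_subintervals a b n c d \<longleftrightarrow>
     (\<forall>i<n. a \<le> c i \<and> c i \<le> d i \<and> d i \<le> b) \<and>
     (\<forall>i<n. \<forall>j<n. i \<noteq> j \<longrightarrow> d i \<le> c j \<or> d j \<le> c i)"

lemma abs_continuous_on_iff:
  "abs_continuous_on a b f \<longleftrightarrow>
     (\<forall>\<epsilon>>0. \<exists>\<delta>>0. \<forall>n c d. nonoverlapping_subintervals a b n c d \<and> (\<Sum>i<n. d i - c i) < \<delta>
        \<longrightarrow> (\<Sum>i<n. norm (f (d i) - f (c i))) < \<epsilon>)"
  unfolding abs_continuous_on_def nonoverlapping_subintervals_def by (simp add: conj_assoc)

lemma abs_continuous_onI:
  assumes "\<And>\<epsilon>. 0 < \<epsilon> \<Longrightarrow> \<exists>\<delta>>0. \<forall>n c d. nonoverlapping_subintervals a b n c d \<and> (\<Sum>i<n. d i - c i) < \<delta>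
             \<longrightarrow> (\<Sum>i<n. norm (f (d i) - f (c i))) < \<epsilon>"
  shows "abs_continuous_on a b f"
  using assms unfolding abs_continuous_on_iff by blast

lemma abs_continuous_onE:
  assumes "abs_continuous_on a b f" "0 < \<epsilon>"
  obtains \<delta> where "0 < \<delta>"
    "\<And>n c d. nonoverlapping_subintervals a b n c d \<Longrightarrow> (\<Sum>i<n. d i - c i) < \<delta>
       \<Longrightarrow> (\<Sum>i<n. norm (f (d i) - f (c i))) < \<epsilon>"
  using assms(1)[unfolded abs_continuous_on_iff, rule_format, OF assms(2)] that by blast

lemma nonoverlapping_subintervals_single:
  "a \<le> c \<Longrightarrow> c \<le> d \<Longrightarrow> d \<le> b \<Longrightarrow> nonoverlapping_subintervals a b 1 (\<lambda>_. c) (\<lambda>_. d)"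
  by (simp add: nonoverlapping_subintervals_def)

lemma nonoverlapping_subintervals_mono:
  "nonoverlapping_subintervals a b n c d \<Longrightarrow> a' \<le> a \<Longrightarrow> b \<le> b'
   \<Longrightarrow> nonoverlapping_subintervals a' b' n c d"
  unfolding nonoverlapping_subintervals_def by force

lemma nonoverlapping_subintervals_snoc:
  assumes "nonoverlapping_subintervals a s n c d" "a \<le> s" "s \<le> t"
  shows "nonoverlapping_subintervals a t (Suc n) (c(n := s)) (d(n := t))"
  using assms unfolding nonoverlapping_subintervals_def by (auto simp: less_Suc_eq)

lemma abs_continuous_on_imp_continuous_on:
  assumes "abs_continuous_on a b f"
  shows "continuous_on {a..b} f"
  unfolding continuous_on_iff
proof (intro ballI allI impI)
  fix x \<epsilon> :: real assume x: "x \<in> {a..b}" and "0 < \<epsilon>"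
  obtain \<delta> where \<delta>: "0 < \<delta>"
    and small: "\<And>n c d. nonoverlapping_subintervals a b n c d \<Longrightarrow> (\<Sum>i<n. d i - c i) < \<delta>
                  \<Longrightarrow> (\<Sum>i<n. norm (f (d i) - f (c i))) < \<epsilon>"
    by (rule abs_continuous_onE[OF assms \<open>0 < \<epsilon>\<close>]) blast
  have "dist (f y) (f x) < \<epsilon>" if "y \<in> {a..b}" "dist y x < \<delta>" for y
    using small[OF nonoverlapping_subintervals_single[of a "min x y" "max x y" b]] that x
    by (cases "x \<le> y") (auto simp: dist_norm norm_minus_commute dist_real_def)
  then show "\<exists>\<delta>>0. \<forall>y\<in>{a..b}. dist y x < \<delta> \<longrightarrow> dist (f y) (f x) < \<epsilon>"
    using \<delta> by blast
qed

lemma abs_continuous_on_dominated: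
  fixes g :: "real \<Rightarrow> 'b::real_normed_vector"
  assumes f: "abs_continuous_on a b f" and "0 \<le> L"
    and dominated: "\<And>s t. s \<in> {a..b} \<Longrightarrow> t \<in> {a..b} \<Longrightarrow> norm (g s - g t) \<le> L * norm (f s - f t)"
  shows "abs_continuous_on a b g"
proof (rule abs_continuous_onI)
  fix \<epsilon> :: real assume "0 < \<epsilon>"
  then have "0 < \<epsilon> / (L + 1)" using \<open>0 \<le> L\<close> by simp
  then obtain \<delta> where \<delta>: "0 < \<delta>"
    and small: "\<And>n c d. nonoverlapping_subintervals a b n c d \<Longrightarrow> (\<Sum>i<n. d i - c i) < \<delta>
                  \<Longrightarrow> (\<Sum>i<n. norm (f (d i) - f (c i))) < \<epsilon> / (L + 1)"
    by (rule abs_continuous_onE[OF f]) blast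
  have "(\<Sum>i<n. norm (g (d i) - g (c i))) < \<epsilon>"
    if cd: "nonoverlapping_subintervals a b n c d" "(\<Sum>i<n. d i - c i) < \<delta>" for n c d
  proof -
    have "(\<Sum>i<n. norm (g (d i) - g (c i))) \<le> L * (\<Sum>i<n. norm (f (d i) - f (c i)))"
      unfolding sum_distrib_left
      by (rule sum_mono, rule dominated) (use cd(1) in \<open>auto simp: nonoverlapping_subintervals_def\<close>)
    also have "\<dots> \<le> L * (\<epsilon> / (L + 1))"
      using small[OF cd] \<open>0 \<le> L\<close> by (intro mult_left_mono) auto
    also have "\<dots> < \<epsilon>" using \<open>0 \<le> L\<close> \<open>0 < \<epsilon>\<close> by (simp add: field_simps)
    finally show ?thesis .
  qed
  then show "\<exists>\<delta>>0. \<forall>n c d. nonoverlapping_subintervals a b n c d \<and> (\<Sum>i<n. d i - c i) < \<delta>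
               \<longrightarrow> (\<Sum>i<n. norm (g (d i) - g (c i))) < \<epsilon>"
    using \<delta> by blast
qed

lemma abs_continuous_on_fst:
  "abs_continuous_on a b f \<Longrightarrow> abs_continuous_on a b (\<lambda>t. fst (f t))"
  by (rule abs_continuous_on_dominated[where L=1])
     (simp_all, metis fst_diff norm_fst_le prod.collapse)

lemma abs_continuous_on_snd:
  "abs_continuous_on a b f \<Longrightarrow> abs_continuous_on a b (\<lambda>t. snd (f t))"
  by (rule abs_continuous_on_dominated[where L=1])
     (simp_all, metis snd_diff norm_snd_le prod.collapse)

lemma abs_continuous_on_scaleR:
  "abs_continuous_on a b f \<Longrightarrow> abs_continuous_on a b (\<lambda>t. k *\<^sub>R f t)"
  by (rule abs_continuous_on_dominated[where L="\<bar>k\<bar>"]) (auto simp flip: scaleR_diff_right)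

lemma abs_continuous_on_subinterval:
  assumes "abs_continuous_on a b f" "a \<le> a'" "b' \<le> b"
  shows "abs_continuous_on a' b' f"
  using assms unfolding abs_continuous_on_iff by (meson nonoverlapping_subintervals_mono)

lemma abs_continuous_on_add:
  assumes f: "abs_continuous_on a b f" and g: "abs_continuous_on a b g"
  shows "abs_continuous_on a b (\<lambda>t. f t + g t)"
proof (rule abs_continuous_onI)
  fix \<epsilon> :: real assume "0 < \<epsilon>"
  then have "0 < \<epsilon> / 2" by simp
  obtain \<delta>f where "0 < \<delta>f"
    and f_small: "\<And>n c d. nonoverlapping_subintervals a b n c d \<Longrightarrow> (\<Sum>i<n. d i - c i) < \<delta>f
                  \<Longrightarrow> (\<Sum>i<n. norm (f (d i) - f (c i))) < \<epsilon> / 2"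
    by (rule abs_continuous_onE[OF f \<open>0 < \<epsilon> / 2\<close>]) blast
  obtain \<delta>g where "0 < \<delta>g"
    and g_small: "\<And>n c d. nonoverlapping_subintervals a b n c d \<Longrightarrow> (\<Sum>i<n. d i - c i) < \<delta>g
                  \<Longrightarrow> (\<Sum>i<n. norm (g (d i) - g (c i))) < \<epsilon> / 2"
    by (rule abs_continuous_onE[OF g \<open>0 < \<epsilon> / 2\<close>]) blast
  have "(\<Sum>i<n. norm ((f (d i) + g (d i)) - (f (c i) + g (c i)))) < \<epsilon>"
    if cd: "nonoverlapping_subintervals a b n c d" "(\<Sum>i<n. d i - c i) < min \<delta>f \<delta>g" for n c d
  proof -
    have "(\<Sum>i<n. norm ((f (d i) + g (d i)) - (f (c i) + g (c i))))
          \<le> (\<Sum>i<n. norm (f (d i) - f (c i))) + (\<Sum>i<n. norm (g (d i) - g (c i)))"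
      unfolding sum.distrib[symmetric]
      by (rule sum_mono) (metis add_diff_add norm_triangle_ineq)
    also have "\<dots> < \<epsilon>" using f_small[OF cd(1)] g_small[OF cd(1)] cd(2) by force
    finally show ?thesis .
  qed
  then show "\<exists>\<delta>>0. \<forall>n c d. nonoverlapping_subintervals a b n c d \<and> (\<Sum>i<n. d i - c i) < \<delta>
               \<longrightarrow> (\<Sum>i<n. norm ((f (d i) + g (d i)) - (f (c i) + g (c i)))) < \<epsilon>"
    using \<open>0 < \<delta>f\<close> \<open>0 < \<delta>g\<close> by (intro exI[of _ "min \<delta>f \<delta>g"]) auto
qed

lemma abs_continuous_on_ident: "abs_continuous_on a b (\<lambda>t::real. t)"
proof (rule abs_continuous_onI)
  fix \<epsilon> :: real assume "0 < \<epsilon>"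
  have "(\<Sum>i<n. norm (d i - c i)) = (\<Sum>i<n. d i - c i)"
    if "nonoverlapping_subintervals a b n c d" for n and c d :: "nat \<Rightarrow> real"
    using that by (intro sum.cong) (auto simp: nonoverlapping_subintervals_def)
  then show "\<exists>\<delta>>0. \<forall>n c d. nonoverlapping_subintervals a b n c d \<and> (\<Sum>i<n. d i - c i) < \<delta>
               \<longrightarrow> (\<Sum>i<n. norm (d i - c i)) < \<epsilon>"
    using \<open>0 < \<epsilon>\<close> by auto
qed

lemma real_induction:
  fixes a b :: real
  assumes "a \<le> b" "P a"
    and right: "\<And>t. a \<le> t \<Longrightarrow> t < b \<Longrightarrow> P t \<Longrightarrow> \<exists>h>0. \<forall>s\<in>{t<..t + h}. P s"
    and left: "\<And>t. a < t \<Longrightarrow> t \<le> b \<Longrightarrow> (\<forall>s\<in>{a..<t}. P s) \<Longrightarrow> P t"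
  shows "P b"
proof -
  define S where "S = {t \<in> {a..b}. \<forall>s\<in>{a..t}. P s}"
  define m where "m = Sup S"
  have "a \<in> S" using assms(1,2) by (simp add: S_def)
  have "bdd_above S" by (rule bdd_aboveI[of _ b]) (simp add: S_def)
  have "a \<le> m" "m \<le> b"
    unfolding m_def using \<open>a \<in> S\<close> \<open>bdd_above S\<close> by (auto intro!: cSup_upper cSup_least simp: S_def)
  have below_m: "P s" if "a \<le> s" "s < m" for s
  proof -
    obtain t where "t \<in> S" "s < t" using less_cSupD[of S s] \<open>a \<in> S\<close> \<open>s < m\<close> m_def by blast
    then show ?thesis using that by (simp add: S_def)
  qed
  have "P m"
    using assms(2) \<open>a \<le> m\<close> \<open>m \<le> b\<close> below_m left by (cases "m = a") auto
  then have "m \<in> S" using \<open>a \<le> m\<close> \<open>m \<le> b\<close> below_m by (force simp: S_def)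
  have "m = b"
  proof (rule ccontr)
    assume "m \<noteq> b"
    then have "m < b" using \<open>m \<le> b\<close> by simp
    then obtain h where "h > 0" "\<forall>s\<in>{m<..m + h}. P s" using right \<open>a \<le> m\<close> \<open>P m\<close> by blast
    then have "min (m + h) b \<in> S" using \<open>m \<in> S\<close> \<open>m < b\<close> by (auto simp: S_def)
    then have "min (m + h) b \<le> m" unfolding m_def using \<open>bdd_above S\<close> by (rule cSup_upper)
    then show False using \<open>h > 0\<close> \<open>m < b\<close> by simp
  qed
  then show ?thesis using \<open>P m\<close> by simp
qed

lemma null_set_open_cover:
  assumes "N \<in> null_sets lebesgue" "0 < \<delta>"
  obtains U where "open U" "N \<subseteq> U" "U \<in> lmeasurable" "measure lebesgue U < \<delta>"
proof -
  obtain U where U: "open U" "N \<subseteq> U" "U - N \<in> lmeasurable" "emeasure lebesgue (U - N) < ennreal \<delta>"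
    using sets_lebesgue_outer_open[of N \<delta>] assms by blast
  have "U = (U - N) \<union> N" using U(2) by blast
  moreover have "N \<in> lmeasurable"
    using assms(1) by (simp add: fmeasurable_def null_setsD1 null_setsD2)
  ultimately have "U \<in> lmeasurable" "measure lebesgue U = measure lebesgue (U - N)"
    using U(3) assms(1) measure_Un_null_set[of "U - N" lebesgue N] by (metis fmeasurable.Un, auto)
  moreover have "measure lebesgue (U - N) < \<delta>"
    using U(3,4) assms(2) by (simp add: emeasure_eq_measure2 ennreal_less_iff)
  ultimately show thesis using U(1,2) that by simp
qed

lemma nonoverlapping_subintervals_length_le_measure:
  assumes "nonoverlapping_subintervals a b n c d" "\<forall>i<n. {c i..d i} \<subseteq> U" "U \<in> lmeasurable"
  shows "(\<Sum>i<n. d i - c i) \<le> measure lebesgue U"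
proof -
  have ordered: "\<forall>i<n. c i \<le> d i" and disjoint: "disjoint_family_on (\<lambda>i. {c i<..<d i}) {..<n}"
    using assms(1) by (auto simp: nonoverlapping_subintervals_def disjoint_family_on_def) fastforce
  have "(\<Sum>i<n. d i - c i) = (\<Sum>i<n. measure lebesgue {c i<..<d i})"
    using ordered by (intro sum.cong) auto
  also have "\<dots> = measure lebesgue (\<Union>i<n. {c i<..<d i})"
    using disjoint ordered by (intro measure_finite_Union[symmetric]) auto
  also have "\<dots> \<le> measure lebesgue U"
    using assms(2,3) by (intro measure_mono_fmeasurable) (auto simp: subset_eq)
  finally show ?thesis .
qed

lemma small_increment_near:
  fixes f :: "real \<Rightarrow> real"
  assumes "open U" "t \<in> U \<or> (f has_real_derivative 0) (at t)" "0 < \<epsilon>"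
  shows "\<exists>h>0. \<forall>s. \<bar>s - t\<bar> < h \<longrightarrow> {min s t..max s t} \<subseteq> U \<or> \<bar>f s - f t\<bar> \<le> \<epsilon> * \<bar>s - t\<bar>"
proof (cases "t \<in> U")
  case True
  then obtain r where "r > 0" "ball t r \<subseteq> U" using \<open>open U\<close> open_contains_ball by blast
  then show ?thesis by (intro exI[of _ r]) (auto simp: dist_real_def subset_eq)
next
  case False
  then have "(f has_derivative (*) 0) (at t)"
    using assms(2) by (simp add: has_field_derivative_def)
  then obtain r where "r > 0" "\<forall>s. norm (s - t) < r \<longrightarrow> norm (f s - f t - 0 * (s - t)) \<le> \<epsilon> * norm (s - t)"
    using \<open>0 < \<epsilon>\<close> unfolding has_derivative_at_alt by blast
  then show ?thesis by (intro exI[of _ r]) auto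
qed

definition controlled_increment :: "real set \<Rightarrow> real \<Rightarrow> (real \<Rightarrow> real) \<Rightarrow> real \<Rightarrow> real \<Rightarrow> bool" where
  "controlled_increment U \<epsilon> f a t \<longleftrightarrow>
     (\<exists>n c d. nonoverlapping_subintervals a t n c d \<and> (\<forall>i<n. {c i..d i} \<subseteq> U) \<and>
        \<bar>f t - f a\<bar> \<le> \<epsilon> * (t - a) + (\<Sum>i<n. \<bar>f (d i) - f (c i)\<bar>))"

lemma controlled_increment_start: "controlled_increment U \<epsilon> f a a"
  unfolding controlled_increment_def by (intro exI[of _ 0]) (simp add: nonoverlapping_subintervals_def)

lemma controlled_increment_extend:
  assumes "controlled_increment U \<epsilon> f a s" "a \<le> s" "s \<le> t" "0 \<le> \<epsilon>"
    and "{s..t} \<subseteq> U \<or> \<bar>f t - f s\<bar> \<le> \<epsilon> * (t - s)"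
  shows "controlled_increment U \<epsilon> f a t"
proof -
  obtain n c d where cd: "nonoverlapping_subintervals a s n c d" "\<forall>i<n. {c i..d i} \<subseteq> U"
    and bound: "\<bar>f s - f a\<bar> \<le> \<epsilon> * (s - a) + (\<Sum>i<n. \<bar>f (d i) - f (c i)\<bar>)"
    using assms(1) by (auto simp: controlled_increment_def)
  have "\<epsilon> * (s - a) \<le> \<epsilon> * (t - a)" using \<open>s \<le> t\<close> \<open>0 \<le> \<epsilon>\<close> by (simp add: mult_left_mono)
  show ?thesis
    using assms(5)
  proof
    assume "{s..t} \<subseteq> U"
    have "\<bar>f t - f a\<bar> \<le> \<epsilon> * (t - a) + (\<Sum>i<Suc n. \<bar>(f \<circ> d(n := t)) i - (f \<circ> c(n := s)) i\<bar>)"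
      using bound \<open>\<epsilon> * (s - a) \<le> \<epsilon> * (t - a)\<close> by simp
    then show ?thesis
      unfolding controlled_increment_def
      using nonoverlapping_subintervals_snoc[OF cd(1) \<open>a \<le> s\<close> \<open>s \<le> t\<close>] cd(2) \<open>{s..t} \<subseteq> U\<close>
      by (intro exI[of _ "Suc n"] exI[of _ "c(n := s)"] exI[of _ "d(n := t)"]) (auto simp: less_Suc_eq)
  next
    assume "\<bar>f t - f s\<bar> \<le> \<epsilon> * (t - s)"
    then have "\<bar>f t - f a\<bar> \<le> \<epsilon> * (t - a) + (\<Sum>i<n. \<bar>f (d i) - f (c i)\<bar>)"
      using bound by (simp add: algebra_simps)
    then show ?thesis
      unfolding controlled_increment_def using nonoverlapping_subintervals_mono[OF cd(1)] \<open>s \<le> t\<close> cd(2)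
      by blast
  qed
qed

text \<open>Cover the exceptional null set by an open set \<open>U\<close> of measure \<open>< \<delta>\<close>. Going from \<open>a\<close> to \<open>b\<close>,
  the increment of \<open>f\<close> costs at most \<open>\<epsilon>\<close> per unit length outside \<open>U\<close>, plus the increments over
  a nonoverlapping family of intervals inside \<open>U\<close>, whose total is \<open>< \<epsilon>\<close> by absolute continuity.\<close>
lemma abs_continuous_on_ae_deriv_zero_increment_le:
  fixes f :: "real \<Rightarrow> real"
  assumes ac: "abs_continuous_on a b f" and "a \<le> b" and "0 < \<epsilon>"
    and deriv: "AE t in lborel. t \<in> {a<..<b} \<longrightarrow> (f has_real_derivative 0) (at t)"
  shows "\<bar>f b - f a\<bar> \<le> \<epsilon> * (b - a) + \<epsilon>"
proof -
  obtain \<delta> where "0 < \<delta>"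
    and small: "\<And>n c d. nonoverlapping_subintervals a b n c d \<Longrightarrow> (\<Sum>i<n. d i - c i) < \<delta>
                  \<Longrightarrow> (\<Sum>i<n. norm (f (d i) - f (c i))) < \<epsilon>"
    by (rule abs_continuous_onE[OF ac \<open>0 < \<epsilon>\<close>]) blast
  obtain N where "N \<in> null_sets lborel"
    and N: "{t. \<not> (t \<in> {a<..<b} \<longrightarrow> (f has_real_derivative 0) (at t))} \<subseteq> N"
    using deriv by (auto simp: eventually_ae_filter)
  then have "N \<union> {a, b} \<in> null_sets lebesgue" by (auto intro!: null_sets_completionI)
  then obtain U where "open U" "N \<union> {a, b} \<subseteq> U" "U \<in> lmeasurable" "measure lebesgue U < \<delta>"
    using \<open>0 < \<delta>\<close> by (rule null_set_open_cover)
  have near: "\<exists>h>0. \<forall>s. \<bar>s - t\<bar> < h \<longrightarrow> {min s t..max s t} \<subseteq> U \<or> \<bar>f s - f t\<bar> \<le> \<epsilon> * \<bar>s - t\<bar>"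
    if "t \<in> {a..b}" for t
  proof (rule small_increment_near[OF \<open>open U\<close> _ \<open>0 < \<epsilon>\<close>])
    show "t \<in> U \<or> (f has_real_derivative 0) (at t)"
      using that N \<open>N \<union> {a, b} \<subseteq> U\<close> by (cases "t \<in> N \<union> {a, b}") (auto simp: subset_eq)
  qed
  let ?P = "controlled_increment U \<epsilon> f a"
  have "?P b"
  proof (rule real_induction[OF \<open>a \<le> b\<close> controlled_increment_start])
    fix t assume "a \<le> t" "t < b" "?P t"
    obtain h where "h > 0" and h: "\<forall>s. \<bar>s - t\<bar> < h \<longrightarrow> {min s t..max s t} \<subseteq> U \<or> \<bar>f s - f t\<bar> \<le> \<epsilon> * \<bar>s - t\<bar>"
      using near[of t] \<open>a \<le> t\<close> \<open>t < b\<close> by auto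
    have "?P s" if "s \<in> {t<..t + h / 2}" for s
      using controlled_increment_extend[OF \<open>?P t\<close> \<open>a \<le> t\<close>, of s] h[rule_format, of s] that \<open>h > 0\<close> \<open>0 < \<epsilon>\<close>
      by auto
    then show "\<exists>h>0. \<forall>s\<in>{t<..t + h}. ?P s" using \<open>h > 0\<close> by (intro exI[of _ "h / 2"]) auto
  next
    fix t assume "a < t" "t \<le> b" and before: "\<forall>s\<in>{a..<t}. ?P s"
    obtain h where "h > 0" and h: "\<forall>s. \<bar>s - t\<bar> < h \<longrightarrow> {min s t..max s t} \<subseteq> U \<or> \<bar>f s - f t\<bar> \<le> \<epsilon> * \<bar>s - t\<bar>"
      using near[of t] \<open>a < t\<close> \<open>t \<le> b\<close> by auto
    define s where "s = max a (t - h / 2)"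
    have "a \<le> s" "s < t" "\<bar>s - t\<bar> < h" using \<open>a < t\<close> \<open>h > 0\<close> by (auto simp: s_def)
    then show "?P t"
      using controlled_increment_extend[of U \<epsilon> f a s t] before h[rule_format, of s] \<open>0 < \<epsilon>\<close>
      by (auto simp: abs_minus_commute)
  qed
  then obtain n c d where cd: "nonoverlapping_subintervals a b n c d" "\<forall>i<n. {c i..d i} \<subseteq> U"
    and bound: "\<bar>f b - f a\<bar> \<le> \<epsilon> * (b - a) + (\<Sum>i<n. \<bar>f (d i) - f (c i)\<bar>)"
    by (auto simp: controlled_increment_def)
  have "(\<Sum>i<n. d i - c i) < \<delta>"
    using nonoverlapping_subintervals_length_le_measure[OF cd \<open>U \<in> lmeasurable\<close>] \<open>measure lebesgue U < \<delta>\<close>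
    by linarith
  then show ?thesis using small[OF cd(1)] bound by simp
qed

lemma abs_continuous_on_ae_deriv_zero_const:
  fixes f :: "real \<Rightarrow> real"
  assumes "abs_continuous_on a b f" "a \<le> b"
    and "AE t in lborel. t \<in> {a<..<b} \<longrightarrow> (f has_real_derivative 0) (at t)"
  shows "f b = f a"
proof -
  have "\<bar>f b - f a\<bar> \<le> 0 + e" if "0 < e" for e
  proof -
    have "0 < e / (b - a + 1)" using that assms(2) by simp
    then have "\<bar>f b - f a\<bar> \<le> e / (b - a + 1) * (b - a) + e / (b - a + 1)"
      by (rule abs_continuous_on_ae_deriv_zero_increment_le[OF assms(1,2) _ assms(3)])
    also have "\<dots> = e / (b - a + 1) * (b - a + 1)" by (simp add: distrib_left)
    also have "\<dots> = e" using assms(2) by simp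
    finally show ?thesis by simp
  qed
  then show ?thesis using field_le_epsilon[of "\<bar>f b - f a\<bar>" 0] by simp
qed

lemma abs_continuous_on_ae_deriv_affine:
  fixes f :: "real \<Rightarrow> real"
  assumes ac: "abs_continuous_on a b f" and "t \<in> {a..b}"
    and deriv: "AE s in lborel. s \<in> {a<..<b} \<longrightarrow> (f has_real_derivative k) (at s)"
  shows "f t = f a + k * (t - a)"
proof -
  define g where "g s = f s + (- k) *\<^sub>R s" for s
  have "abs_continuous_on a t g"
    unfolding g_def using \<open>t \<in> {a..b}\<close>
    by (intro abs_continuous_on_add abs_continuous_on_scaleR abs_continuous_on_ident
        abs_continuous_on_subinterval[OF ac]) auto
  moreover have "AE s in lborel. s \<in> {a<..<t} \<longrightarrow> (g has_real_derivative 0) (at s)"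
    using deriv
  proof eventually_elim
    case (elim s)
    then show ?case
      using \<open>t \<in> {a..b}\<close> unfolding g_def by (auto intro!: derivative_eq_intros)
  qed
  ultimately have "g t = g a" using \<open>t \<in> {a..b}\<close> by (intro abs_continuous_on_ae_deriv_zero_const) auto
  then show ?thesis unfolding g_def by (simp add: algebra_simps)
qed

lemma endpoints_mult_nonneg_if_no_root:
  fixes f :: "real \<Rightarrow> real"
  assumes cont: "continuous_on {a..b} f" and "a \<le> b" and no_root: "\<forall>t\<in>{a<..<b}. f t \<noteq> 0"
  shows "0 \<le> f a * f b"
proof (rule ccontr)
  assume "\<not> 0 \<le> f a * f b"
  then have "f a \<le> 0 \<and> 0 \<le> f b \<or> f b \<le> 0 \<and> 0 \<le> f a" "f a \<noteq> 0" "f b \<noteq> 0"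
    by (auto simp: zero_le_mult_iff)
  then obtain x where "a \<le> x" "x \<le> b" "f x = 0"
    using IVT'[OF _ _ \<open>a \<le> b\<close> cont] IVT2'[OF _ _ \<open>a \<le> b\<close> cont] by blast
  with \<open>f a \<noteq> 0\<close> \<open>f b \<noteq> 0\<close> no_root show False by force
qed

lemma sgn_constant_if_no_root:
  fixes f :: "real \<Rightarrow> real"
  assumes cont: "continuous_on {a..b} f" and "a < b" and no_root: "\<forall>t\<in>{a<..<b}. f t \<noteq> 0"
  shows "\<exists>\<rho>\<in>{-1, 1}. \<forall>t\<in>{a<..<b}. sgn (f t) = \<rho>"
proof -
  define m where "m = (a + b) / 2"
  have m: "m \<in> {a<..<b}" using \<open>a < b\<close> by (simp add: m_def)
  have "sgn (f t) = sgn (f m)" if t: "t \<in> {a<..<b}" for t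
  proof -
    have "0 \<le> f (min t m) * f (max t m)"
      using t m by (intro endpoints_mult_nonneg_if_no_root continuous_on_subset[OF cont] ballI no_root[rule_format]) auto
    then have "0 \<le> f t * f m" by (metis max_def min_def mult.commute)
    moreover have "f t \<noteq> 0" "f m \<noteq> 0" using no_root t m by blast+
    ultimately show ?thesis by (auto simp: sgn_if zero_le_mult_iff)
  qed
  moreover have "sgn (f m) \<in> {-1, 1}" using no_root m by (auto simp: sgn_if)
  ultimately show ?thesis by blast
qed

lemma AE_imp_ex_greaterThanLessThan:
  fixes a b :: real
  assumes "AE t in lborel. t \<in> {a<..<b} \<longrightarrow> P t" "a < b"
  shows "\<exists>t\<in>{a<..<b}. P t"
proof (rule ccontr)
  assume none: "\<not> (\<exists>t\<in>{a<..<b}. P t)"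
  have "AE t in lborel. t \<notin> {a<..<b}" using assms(1) by eventually_elim (use none in auto)
  then have "{a<..<b} \<in> null_sets lborel" by (simp add: AE_iff_null_sets)
  then show False using \<open>a < b\<close> by (simp add: null_sets_def)
qed

lemma continuous_on_AE_eq_imp_eq:
  fixes g :: "real \<Rightarrow> real"
  assumes cont: "continuous_on {a..b} g" and "a < b" and "t \<in> {a..b}"
    and ae: "AE s in lborel. s \<in> {a..b} \<longrightarrow> g s = c"
  shows "g t = c"
proof (rule ccontr)
  assume "g t \<noteq> c"
  then obtain e where "e > 0" and e: "\<forall>s\<in>{a..b}. dist t s < e \<longrightarrow> g s \<noteq> c"
    using continuous_on_avoid[OF cont \<open>t \<in> {a..b}\<close>] by blast
  define l r where "l = max a (t - e / 2)" and "r = min b (t + e / 2)"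
  have "l < r" and sub: "{l<..<r} \<subseteq> {a..b}"
    using \<open>a < b\<close> \<open>t \<in> {a..b}\<close> \<open>e > 0\<close> by (auto simp: l_def r_def)
  have "AE s in lborel. s \<in> {l<..<r} \<longrightarrow> g s = c"
    using ae by eventually_elim (use sub in auto)
  then have "\<exists>s\<in>{l<..<r}. g s = c" using \<open>l < r\<close> by (rule AE_imp_ex_greaterThanLessThan)
  then obtain s where "s \<in> {l<..<r}" "g s = c" by blast
  moreover have "dist t s < e" using \<open>s \<in> {l<..<r}\<close> \<open>e > 0\<close> by (auto simp: l_def r_def dist_real_def)
  ultimately show False using e sub by blast
qed

lemma has_real_derivative_fst:
  assumes "(f has_vector_derivative v) F"
  shows "((\<lambda>s. fst (f s)) has_real_derivative fst v) F"
proof -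
  have "((\<lambda>s. fst (f s)) has_derivative (\<lambda>h. fst (h *\<^sub>R v))) F"
    using has_derivative_fst assms unfolding has_vector_derivative_def by blast
  moreover have "(\<lambda>h. fst (h *\<^sub>R v)) = (*) (fst v)" by (auto simp: fun_eq_iff)
  ultimately show ?thesis by (simp add: has_field_derivative_def)
qed

lemma has_real_derivative_snd:
  assumes "(f has_vector_derivative v) F"
  shows "((\<lambda>s. snd (f s)) has_real_derivative snd v) F"
proof -
  have "((\<lambda>s. snd (f s)) has_derivative (\<lambda>h. snd (h *\<^sub>R v))) F"
    using has_derivative_snd assms unfolding has_vector_derivative_def by blast
  moreover have "(\<lambda>h. snd (h *\<^sub>R v)) = (*) (snd v)" by (auto simp: fun_eq_iff)
  ultimately show ?thesis by (simp add: has_field_derivative_def)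
qed

lemma maximizer_eq_sgn:
  fixes a b x y :: real
  assumes "\<bar>a\<bar> \<le> 1" "\<bar>b\<bar> \<le> 1" and max: "a * x + b * y = \<bar>x\<bar> + \<bar>y\<bar>"
  shows "x \<noteq> 0 \<Longrightarrow> a = sgn x" and "y \<noteq> 0 \<Longrightarrow> b = sgn y"
proof -
  have le_abs: "c * z \<le> \<bar>z\<bar>" if "\<bar>c\<bar> \<le> 1" for c z :: real
  proof -
    have "c * z \<le> \<bar>c\<bar> * \<bar>z\<bar>" by (metis abs_ge_self abs_mult)
    also have "\<dots> \<le> \<bar>z\<bar>" using that by (simp add: mult_left_le_one_le)
    finally show ?thesis .
  qed
  have eq_sgn: "c = sgn z" if "c * z = \<bar>z\<bar>" "z \<noteq> 0" for c z :: real
  proof -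
    have "c * z = sgn z * z" using that(1) abs_sgn[of z] by (simp add: mult.commute)
    then show ?thesis using that(2) by simp
  qed
  have "a * x = \<bar>x\<bar>" "b * y = \<bar>y\<bar>"
    using le_abs[OF assms(1), of x] le_abs[OF assms(2), of y] max by linarith+
  then show "x \<noteq> 0 \<Longrightarrow> a = sgn x" and "y \<noteq> 0 \<Longrightarrow> b = sgn y" by (simp_all add: eq_sgn)
qed

section \<open>The Hamiltonian system\<close>

lemma dHdp_eq: "dHdp l p w = (fst w * snd l - snd w * snd l, 0)"
proof -
  have "((\<lambda>s. Ham l (s, snd p) w) has_real_derivative fst w * snd l - snd w * snd l) (at (fst p))"
    "((\<lambda>s. Ham l (fst p, s) w) has_real_derivative 0) (at (snd p))"
    unfolding Ham_def ucomp_def pairing_def Yfield_def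
    by (auto intro!: derivative_eq_intros simp: algebra_simps)
  then show ?thesis unfolding dHdp_def by (simp add: DERIV_imp_deriv)
qed

lemma dHdl_eq: "dHdl l p w = (fst w + snd w, fst w * fst p - snd w * fst p)"
proof -
  have "((\<lambda>s. Ham (s, snd l) p w) has_real_derivative fst w + snd w) (at (fst l))"
    "((\<lambda>s. Ham (fst l, s) p w) has_real_derivative fst w * fst p - snd w * fst p) (at (snd l))"
    unfolding Ham_def ucomp_def pairing_def Yfield_def
    by (auto intro!: derivative_eq_intros simp: algebra_simps)
  then show ?thesis unfolding dHdl_def by (simp add: DERIV_imp_deriv)
qed

definition field_sign :: "nat \<Rightarrow> real" where
  "field_sign i = (if i = 1 then 1 else -1)"

lemma switching_eq: "switching lam \<gamma> i t = fst (lam t) + field_sign i * snd (lam t) * fst (\<gamma> t)"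
  by (simp add: switching_def pairing_def Yfield_def field_sign_def)

section \<open>Extremals with a regular arc\<close>

locale extremal_with_regular_arc =
  fixes T :: real and lam \<gamma> u :: "real \<Rightarrow> real \<times> real"
  assumes extremal: "extremal_pair T lam \<gamma> u"
    and regular_arc_exists: "\<exists>a b. regular_arc T lam \<gamma> a b"
begin

abbreviation \<phi> :: "nat \<Rightarrow> real \<Rightarrow> real" where "\<phi> \<equiv> switching lam \<gamma>"

definition py :: real where "py = snd (lam 0)"

definition level :: real where "level = \<bar>\<phi> 1 0\<bar> + \<bar>\<phi> 2 0\<bar>"

lemma T_pos: "0 < T"
  using regular_arc_exists by (auto simp: regular_arc_def regular_interval_def)

lemma abs_continuous_on_lam: "abs_continuous_on 0 T lam"
  using extremal by (simp add: extremal_pair_def)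

lemma abs_continuous_on_gamma: "abs_continuous_on 0 T \<gamma>"
  using extremal by (simp add: extremal_pair_def admissible_def)

lemma continuous_on_switching: "continuous_on {0..T} (\<phi> i)"
proof -
  have "\<phi> i = (\<lambda>t. fst (lam t) + field_sign i * snd (lam t) * fst (\<gamma> t))"
    by (simp add: fun_eq_iff switching_eq)
  moreover have "continuous_on {0..T} lam" "continuous_on {0..T} \<gamma>"
    using abs_continuous_on_lam abs_continuous_on_gamma by (auto intro: abs_continuous_on_imp_continuous_on)
  ultimately show ?thesis by (auto intro!: continuous_intros)
qed

lemma AE_hamiltonian_equations: "AE t in lborel. t \<in> {0..T} \<longrightarrow>
    ((\<lambda>s. snd (lam s)) has_real_derivative 0) (at t) \<and>
    ((\<lambda>s. fst (lam s)) has_real_derivative (snd (u t) - fst (u t)) * snd (lam t)) (at t) \<and>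
    ((\<lambda>s. fst (\<gamma> s)) has_real_derivative fst (u t) + snd (u t)) (at t)"
proof -
  have "AE t in lborel. t \<in> {0..T} \<longrightarrow>
      (lam has_vector_derivative - dHdp (lam t) (\<gamma> t) (u t)) (at t) \<and>
      (\<gamma> has_vector_derivative dHdl (lam t) (\<gamma> t) (u t)) (at t)"
    using extremal by (simp add: extremal_pair_def)
  then show ?thesis
  proof eventually_elim
    case (elim t)
    show ?case
    proof
      assume "t \<in> {0..T}"
      then have "(lam has_vector_derivative - dHdp (lam t) (\<gamma> t) (u t)) (at t)"
        "(\<gamma> has_vector_derivative dHdl (lam t) (\<gamma> t) (u t)) (at t)"
        using elim by blast+
      from has_real_derivative_snd[OF this(1)] has_real_derivative_fst[OF this(1)]
        has_real_derivative_fst[OF this(2)]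
      show "((\<lambda>s. snd (lam s)) has_real_derivative 0) (at t) \<and>
        ((\<lambda>s. fst (lam s)) has_real_derivative (snd (u t) - fst (u t)) * snd (lam t)) (at t) \<and>
        ((\<lambda>s. fst (\<gamma> s)) has_real_derivative fst (u t) + snd (u t)) (at t)"
        by (simp add: dHdp_eq dHdl_eq algebra_simps)
    qed
  qed
qed

lemma pairing_Yfield: "pairing (lam t) (Yfield i (\<gamma> t)) = \<phi> i t"
  by (simp add: switching_def)

lemma AE_control_eq_sgn:
  "AE t in lborel. t \<in> {0..T} \<longrightarrow> (\<forall>i\<in>{1,2}. \<phi> i t \<noteq> 0 \<longrightarrow> ucomp i (u t) = sgn (\<phi> i t))"
proof -
  have "AE t in lborel. t \<in> {0..T} \<longrightarrow> (\<forall>i\<in>{1,2}. \<bar>ucomp i (u t)\<bar> \<le> 1)"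
    using extremal by (simp add: extremal_pair_def admissible_def)
  moreover obtain h where "AE t in lborel. t \<in> {0..T} \<longrightarrow>
      (\<Sum>i\<in>{1,2}. ucomp i (u t) * \<phi> i t) = (\<Sum>i\<in>{1,2}. \<bar>\<phi> i t\<bar>) \<and> (\<Sum>i\<in>{1,2}. \<bar>\<phi> i t\<bar>) = h"
    using extremal by (auto simp: extremal_pair_def pairing_Yfield)
  ultimately show ?thesis
  proof eventually_elim
    case (elim t)
    then show ?case
      using maximizer_eq_sgn[of "fst (u t)" "snd (u t)" "\<phi> 1 t" "\<phi> 2 t"] by (auto simp: ucomp_def)
  qed
qed

lemma level_eq: "t \<in> {0..T} \<Longrightarrow> \<bar>\<phi> 1 t\<bar> + \<bar>\<phi> 2 t\<bar> = level"
proof -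
  obtain h where ae: "AE t in lborel. t \<in> {0..T} \<longrightarrow> \<bar>\<phi> 1 t\<bar> + \<bar>\<phi> 2 t\<bar> = h"
    using extremal by (force simp: extremal_pair_def pairing_Yfield elim: eventually_mono)
  have "continuous_on {0..T} (\<lambda>t. \<bar>\<phi> 1 t\<bar> + \<bar>\<phi> 2 t\<bar>)"
    by (intro continuous_intros continuous_on_switching)
  from continuous_on_AE_eq_imp_eq[OF this T_pos _ ae]
  show "t \<in> {0..T} \<Longrightarrow> \<bar>\<phi> 1 t\<bar> + \<bar>\<phi> 2 t\<bar> = level"
    using T_pos by (simp add: level_def)
qed

lemma level_pos: "0 < level"
proof -
  obtain a b where "regular_interval T lam \<gamma> a b" using regular_arc_exists by (auto simp: regular_arc_def)
  then have "(a + b) / 2 \<in> {0..T}" "\<phi> 1 ((a + b) / 2) \<noteq> 0" by (auto simp: regular_interval_def)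
  then show ?thesis using level_eq[of "(a + b) / 2"] abs_ge_zero[of "\<phi> 2 ((a + b) / 2)"] by simp
qed

lemma py_eq:
  assumes "t \<in> {0..T}"
  shows "snd (lam t) = py"
  unfolding py_def
proof (rule abs_continuous_on_ae_deriv_zero_const[where f = "\<lambda>s. snd (lam s)"])
  show "abs_continuous_on 0 t (\<lambda>s. snd (lam s))"
    using assms by (intro abs_continuous_on_subinterval[OF abs_continuous_on_snd[OF abs_continuous_on_lam]]) auto
  show "AE s in lborel. s \<in> {0<..<t} \<longrightarrow> ((\<lambda>s. snd (lam s)) has_real_derivative 0) (at s)"
    using AE_hamiltonian_equations by eventually_elim (use assms in auto)
qed (use assms in simp)

text \<open>\<open>switching_py i\<close> agrees with \<open>\<phi> i\<close> on \<open>[0,T]\<close>, but is a linear combination of absolutely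
  continuous functions.\<close>
definition switching_py :: "nat \<Rightarrow> real \<Rightarrow> real" where
  "switching_py i t = fst (lam t) + (field_sign i * py) *\<^sub>R fst (\<gamma> t)"

lemma switching_py_eq: "t \<in> {0..T} \<Longrightarrow> switching_py i t = \<phi> i t"
  using py_eq by (simp add: switching_py_def switching_eq)

lemma abs_continuous_on_switching_py: "abs_continuous_on 0 T (switching_py i)"
  unfolding switching_py_def
  by (intro abs_continuous_on_add abs_continuous_on_scaleR abs_continuous_on_fst
      abs_continuous_on_lam abs_continuous_on_gamma)

lemma AE_switching_py_deriv:
  assumes "i \<in> {1,2}"
  shows "AE t in lborel. t \<in> {0..T} \<longrightarrow>
           (switching_py i has_real_derivative 2 * field_sign i * py * ucomp (3 - i) (u t)) (at t)"
  using AE_hamiltonian_equations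
proof eventually_elim
  case (elim t)
  show ?case
  proof
    assume "t \<in> {0..T}"
    with elim have "(switching_py i has_real_derivative
        (snd (u t) - fst (u t)) * py + field_sign i * py * (fst (u t) + snd (u t))) (at t)"
      unfolding switching_py_def using py_eq by (auto intro!: derivative_eq_intros)
    moreover have "(snd (u t) - fst (u t)) * py + field_sign i * py * (fst (u t) + snd (u t))
        = 2 * field_sign i * py * ucomp (3 - i) (u t)"
      using assms by (auto simp: field_sign_def ucomp_def algebra_simps)
    ultimately show "(switching_py i has_real_derivative 2 * field_sign i * py * ucomp (3 - i) (u t)) (at t)"
      by simp
  qed
qed

text \<open>Where \<open>\<phi>\<^sub>3\<^sub>-\<^sub>i\<close> does not vanish, \<open>u\<^sub>3\<^sub>-\<^sub>i = sgn \<phi>\<^sub>3\<^sub>-\<^sub>i\<close> is a constant \<open>\<rho>\<close>, so \<open>\<phi>\<^sub>i\<close> has constant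
  slope \<open>2 * field_sign i * py * \<rho>\<close>.\<close>
lemma switching_affine:
  assumes i: "i \<in> {1,2}" and "0 \<le> a" "a < b" "b \<le> T"
    and other: "\<forall>t\<in>{a<..<b}. \<phi> (3 - i) t \<noteq> 0"
  obtains k where "\<bar>k\<bar> = 2 * \<bar>py\<bar>" "\<And>t. t \<in> {a..b} \<Longrightarrow> \<phi> i t = \<phi> i a + k * (t - a)"
proof -
  obtain \<rho> where \<rho>: "\<rho> \<in> {-1, 1}" "\<forall>t\<in>{a<..<b}. sgn (\<phi> (3 - i) t) = \<rho>"
    using sgn_constant_if_no_root[OF continuous_on_subset[OF continuous_on_switching] \<open>a < b\<close> other]
      \<open>0 \<le> a\<close> \<open>b \<le> T\<close> by auto
  define k where "k = 2 * field_sign i * py * \<rho>"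
  have "abs_continuous_on a b (switching_py i)"
    using abs_continuous_on_switching_py \<open>0 \<le> a\<close> \<open>b \<le> T\<close> by (rule abs_continuous_on_subinterval)
  moreover have "AE t in lborel. t \<in> {a<..<b} \<longrightarrow> (switching_py i has_real_derivative k) (at t)"
    using AE_switching_py_deriv[OF i] AE_control_eq_sgn
  proof eventually_elim
    case (elim t)
    then show ?case
      using \<rho> other i \<open>0 \<le> a\<close> \<open>b \<le> T\<close> by (auto simp: k_def)
  qed
  ultimately have "switching_py i t = switching_py i a + k * (t - a)" if "t \<in> {a..b}" for t
    using that by (intro abs_continuous_on_ae_deriv_affine) auto
  moreover have "\<bar>k\<bar> = 2 * \<bar>py\<bar>" using \<rho>(1) by (auto simp: k_def field_sign_def abs_mult)
  ultimately show thesis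
    using that switching_py_eq \<open>0 \<le> a\<close> \<open>b \<le> T\<close> by (metis atLeastAtMost_iff order_trans)
qed

definition switching_times :: "real set" where
  "switching_times = {t \<in> {0..T}. \<exists>i\<in>{1,2}. \<phi> i t = 0}"

lemma other_switching_at_switching_time:
  assumes "t \<in> {0..T}" "i \<in> {1,2}" "\<phi> i t = 0"
  shows "\<bar>\<phi> (3 - i) t\<bar> = level"
  using level_eq[OF assms(1)] assms(2,3) by auto

lemma py_nonzero:
  assumes "t \<in> switching_times"
  shows "py \<noteq> 0"
proof
  assume "py = 0"
  obtain i where "t \<in> {0..T}" "i \<in> {1,2}" "\<phi> i t = 0"
    using assms by (auto simp: switching_times_def)
  moreover have "\<phi> 1 t = \<phi> 2 t" using py_eq[OF \<open>t \<in> {0..T}\<close>] \<open>py = 0\<close> by (simp add: switching_eq)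
  ultimately have "level = 0" using other_switching_at_switching_time by force
  then show False using level_pos by simp
qed

lemma switching_through_zero:
  assumes "i \<in> {1,2}" "0 \<le> a" "a < b" "b \<le> T"
    and "\<forall>t\<in>{a<..<b}. \<phi> (3 - i) t \<noteq> 0" and "z \<in> {a..b}" "\<phi> i z = 0"
  obtains k where "\<bar>k\<bar> = 2 * \<bar>py\<bar>" "\<And>t. t \<in> {a..b} \<Longrightarrow> \<phi> i t = k * (t - z)"
proof -
  obtain k where "\<bar>k\<bar> = 2 * \<bar>py\<bar>" and affine: "\<And>t. t \<in> {a..b} \<Longrightarrow> \<phi> i t = \<phi> i a + k * (t - a)"
    using switching_affine assms(1-5) by blast
  moreover have "\<phi> i a = - k * (z - a)" using affine[OF \<open>z \<in> {a..b}\<close>] \<open>\<phi> i z = 0\<close> by simp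
  ultimately show thesis using that by (simp add: algebra_simps)
qed

lemma switching_times_isolated:
  assumes "z \<in> switching_times"
  shows "\<exists>r>0. \<forall>t\<in>switching_times. dist z t < r \<longrightarrow> t = z"
proof -
  obtain i where i: "i \<in> {1,2}" "\<phi> i z = 0" and "z \<in> {0..T}"
    using assms by (auto simp: switching_times_def)
  then have "\<phi> (3 - i) z \<noteq> 0" using other_switching_at_switching_time level_pos by force
  then obtain r where "r > 0" and r: "\<forall>t\<in>{0..T}. dist z t < r \<longrightarrow> \<phi> (3 - i) t \<noteq> 0"
    using continuous_on_avoid[OF continuous_on_switching \<open>z \<in> {0..T}\<close>] by blast
  have "t = z" if "t \<in> switching_times" "dist z t < r" for t
  proof (rule ccontr)
    assume "t \<noteq> z"
    have "t \<in> {0..T}" using that(1) by (simp add: switching_times_def)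
    with that r have "\<phi> i t = 0" using i(1) by (force simp: switching_times_def)
    define a b where "a = min z t" and "b = max z t"
    have "0 \<le> a" "a < b" "b \<le> T" "z \<in> {a..b}"
      using \<open>t \<noteq> z\<close> \<open>z \<in> {0..T}\<close> \<open>t \<in> {0..T}\<close> by (auto simp: a_def b_def)
    moreover have "\<forall>s\<in>{a<..<b}. \<phi> (3 - i) s \<noteq> 0"
    proof
      fix s assume "s \<in> {a<..<b}"
      then have "s \<in> {0..T}" "dist z s < r"
        using \<open>dist z t < r\<close> \<open>z \<in> {0..T}\<close> \<open>t \<in> {0..T}\<close> by (auto simp: a_def b_def dist_real_def)
      then show "\<phi> (3 - i) s \<noteq> 0" using r by blast
    qed
    ultimately obtain k where "\<bar>k\<bar> = 2 * \<bar>py\<bar>" "\<And>s. s \<in> {a..b} \<Longrightarrow> \<phi> i s = k * (s - z)"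
      using switching_through_zero[OF i(1)] i(2) by blast
    then have "\<phi> i t = k * (t - z)" by (simp add: a_def b_def)
    moreover have "k \<noteq> 0" using \<open>\<bar>k\<bar> = 2 * \<bar>py\<bar>\<close> py_nonzero[OF assms] by simp
    ultimately show False using \<open>\<phi> i t = 0\<close> \<open>t \<noteq> z\<close> by simp
  qed
  then show ?thesis using \<open>r > 0\<close> by blast
qed

lemma finite_switching_times: "finite switching_times"
proof -
  have "switching_times = {0..T} \<inter> (\<phi> 1 -` {0} \<union> \<phi> 2 -` {0})"
    by (auto simp: switching_times_def)
  then have "closed switching_times"
    by (simp add: Int_Un_distrib closed_Un continuous_closed_preimage continuous_on_switching)
  then have "compact switching_times"
    by (metis bounded_Int bounded_closed_interval compact_eq_bounded_closed
        \<open>switching_times = {0..T} \<inter> _\<close>)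
  moreover have "\<not> z islimpt switching_times" if "z \<in> switching_times" for z
    using switching_times_isolated[OF that] unfolding islimpt_approachable by (metis dist_commute)
  ultimately show ?thesis using finite_not_islimpt_in_compact[of switching_times switching_times] by simp
qed

definition breakpoints :: "real set" where
  "breakpoints = switching_times \<union> {0, T}"

lemma finite_breakpoints: "finite breakpoints"
  by (simp add: breakpoints_def finite_switching_times)

lemma breakpoints_subset: "breakpoints \<subseteq> {0..T}"
  using T_pos by (auto simp: breakpoints_def switching_times_def)

lemma regular_interval_iff:
  "regular_interval T lam \<gamma> a b \<longleftrightarrow> 0 \<le> a \<and> a < b \<and> b \<le> T \<and> {a<..<b} \<inter> breakpoints = {}"
  by (auto simp: regular_interval_def breakpoints_def switching_times_def)

lemma regular_arc_start_breakpoint: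
  assumes arc: "regular_arc T lam \<gamma> a b"
  shows "a \<in> breakpoints"
proof (rule ccontr)
  assume "a \<notin> breakpoints"
  have "0 \<le> a" "a < b" "b \<le> T" and no_break: "{a<..<b} \<inter> breakpoints = {}"
    using arc by (auto simp: regular_arc_def regular_interval_iff)
  then have "0 < a" using \<open>a \<notin> breakpoints\<close> by (cases "a = 0") (auto simp: breakpoints_def)
  obtain d where "d > 0" and d: "\<forall>x\<in>breakpoints. x \<noteq> a \<longrightarrow> d \<le> dist a x"
    using finite_set_avoid[OF finite_breakpoints, of a] by blast
  define a' where "a' = max 0 (a - d / 2)"
  have "{a'<..<b} \<inter> breakpoints = {}"
    using d no_break \<open>a \<notin> breakpoints\<close> \<open>d > 0\<close> by (force simp: a'_def dist_real_def)
  then have "regular_interval T lam \<gamma> a' b"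
    using \<open>0 < a\<close> \<open>a < b\<close> \<open>b \<le> T\<close> \<open>d > 0\<close> by (auto simp: regular_interval_iff a'_def)
  moreover have "{a<..<b} \<subseteq> {a'<..<b}" using \<open>0 < a\<close> \<open>d > 0\<close> by (auto simp: a'_def)
  ultimately have "a' = a" using arc by (auto simp: regular_arc_def)
  then show False using \<open>0 < a\<close> \<open>d > 0\<close> by (simp add: a'_def)
qed

lemma regular_arc_end_breakpoint:
  assumes arc: "regular_arc T lam \<gamma> a b"
  shows "b \<in> breakpoints"
proof (rule ccontr)
  assume "b \<notin> breakpoints"
  have "0 \<le> a" "a < b" "b \<le> T" and no_break: "{a<..<b} \<inter> breakpoints = {}"
    using arc by (auto simp: regular_arc_def regular_interval_iff)
  then have "b < T" using \<open>b \<notin> breakpoints\<close> by (cases "b = T") (auto simp: breakpoints_def)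
  obtain d where "d > 0" and d: "\<forall>x\<in>breakpoints. x \<noteq> b \<longrightarrow> d \<le> dist b x"
    using finite_set_avoid[OF finite_breakpoints, of b] by blast
  define b' where "b' = min T (b + d / 2)"
  have "{a<..<b'} \<inter> breakpoints = {}"
    using d no_break \<open>b \<notin> breakpoints\<close> \<open>d > 0\<close> by (force simp: b'_def dist_real_def)
  then have "regular_interval T lam \<gamma> a b'"
    using \<open>0 \<le> a\<close> \<open>a < b\<close> \<open>b < T\<close> \<open>d > 0\<close> by (auto simp: regular_interval_iff b'_def)
  moreover have "{a<..<b} \<subseteq> {a<..<b'}" using \<open>b < T\<close> \<open>d > 0\<close> by (auto simp: b'_def)
  ultimately have "b' = b" using arc by (auto simp: regular_arc_def)
  then show False using \<open>b < T\<close> \<open>d > 0\<close> by (simp add: b'_def)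
qed

lemma regular_arc_iff:
  "regular_arc T lam \<gamma> a b \<longleftrightarrow>
     a \<in> breakpoints \<and> b \<in> breakpoints \<and> a < b \<and> {a<..<b} \<inter> breakpoints = {}"
proof
  assume "regular_arc T lam \<gamma> a b"
  then show "a \<in> breakpoints \<and> b \<in> breakpoints \<and> a < b \<and> {a<..<b} \<inter> breakpoints = {}"
    using regular_arc_start_breakpoint regular_arc_end_breakpoint
    by (auto simp: regular_arc_def regular_interval_iff)
next
  assume consecutive: "a \<in> breakpoints \<and> b \<in> breakpoints \<and> a < b \<and> {a<..<b} \<inter> breakpoints = {}"
  then have "regular_interval T lam \<gamma> a b" using breakpoints_subset by (auto simp: regular_interval_iff)
  moreover have "a' = a \<and> b' = b" if "regular_interval T lam \<gamma> a' b'" "{a<..<b} \<subseteq> {a'<..<b'}" for a' b'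
  proof -
    have "a' \<le> a" "b \<le> b'" "{a'<..<b'} \<inter> breakpoints = {}"
      using that consecutive by (auto simp: regular_interval_iff greaterThanLessThan_subseteq_greaterThanLessThan)
    moreover have "a \<notin> {a'<..<b'}" "b \<notin> {a'<..<b'}" using consecutive \<open>{a'<..<b'} \<inter> breakpoints = {}\<close> by blast+
    ultimately show ?thesis using consecutive by auto
  qed
  ultimately show "regular_arc T lam \<gamma> a b" by (auto simp: regular_arc_def)
qed

lemma next_breakpoint:
  assumes "x < T"
  obtains q where "q \<in> breakpoints" "x < q" "{x<..<q} \<inter> breakpoints = {}"
proof -
  define Q where "Q = {z \<in> breakpoints. x < z}"
  have "T \<in> Q" "finite Q" using assms finite_breakpoints by (auto simp: Q_def breakpoints_def)
  then have "Min Q \<in> Q" "\<forall>z\<in>Q. Min Q \<le> z" by (metis Min_in empty_iff, simp)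
  then show thesis using that[of "Min Q"] by (force simp: Q_def)
qed

lemma prev_breakpoint:
  assumes "0 < x"
  obtains p where "p \<in> breakpoints" "p < x" "{p<..<x} \<inter> breakpoints = {}"
proof -
  define P where "P = {z \<in> breakpoints. z < x}"
  have "0 \<in> P" "finite P" using assms finite_breakpoints by (auto simp: P_def breakpoints_def)
  then have "Max P \<in> P" "\<forall>z\<in>P. z \<le> Max P" by (metis Max_in empty_iff, simp)
  then show thesis using that[of "Max P"] by (force simp: P_def)
qed

lemma regular_bang_bang: "regular_bang_bang T lam \<gamma>"
  unfolding regular_bang_bang_def
proof (intro exI conjI)
  let ?A = "{(a, b). regular_arc T lam \<gamma> a b}"
  show "finite breakpoints" by (rule finite_breakpoints)
  show "finite ?A"
    by (rule finite_subset[of _ "breakpoints \<times> breakpoints"]) (auto simp: regular_arc_iff finite_breakpoints)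
  show "\<forall>(a, b)\<in>?A. regular_arc T lam \<gamma> a b" by simp
  show "{0..T} - breakpoints = (\<Union>(a, b)\<in>?A. {a<..<b})"
  proof (intro equalityI subsetI)
    fix x assume x: "x \<in> {0..T} - breakpoints"
    then have "0 < x" "x < T" by (auto simp: breakpoints_def less_le)
    obtain p where "p \<in> breakpoints" "p < x" "{p<..<x} \<inter> breakpoints = {}"
      using prev_breakpoint[OF \<open>0 < x\<close>] .
    moreover obtain q where "q \<in> breakpoints" "x < q" "{x<..<q} \<inter> breakpoints = {}"
      using next_breakpoint[OF \<open>x < T\<close>] .
    moreover have "{p<..<q} = {p<..<x} \<union> {x} \<union> {x<..<q}" using \<open>p < x\<close> \<open>x < q\<close> by auto
    ultimately have "regular_arc T lam \<gamma> p q" using x by (auto simp: regular_arc_iff)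
    then show "x \<in> (\<Union>(a, b)\<in>?A. {a<..<b})" using \<open>p < x\<close> \<open>x < q\<close> by (intro UN_I[of "(p, q)"]) auto
  next
    fix x assume "x \<in> (\<Union>(a, b)\<in>?A. {a<..<b})"
    then obtain a b where "regular_arc T lam \<gamma> a b" "x \<in> {a<..<b}" by blast
    then show "x \<in> {0..T} - breakpoints"
      using breakpoints_subset by (auto simp: regular_arc_iff)
  qed
qed

lemma regular_arc_bounds: "regular_arc T lam \<gamma> a b \<Longrightarrow> 0 \<le> a \<and> a < b \<and> b \<le> T"
  by (simp add: regular_arc_def regular_interval_def)

lemma regular_arc_switching_nonzero:
  "regular_arc T lam \<gamma> a b \<Longrightarrow> i \<in> {1,2} \<Longrightarrow> \<forall>t\<in>{a<..<b}. \<phi> i t \<noteq> 0"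
  by (auto simp: regular_arc_def regular_interval_def)

lemma interior_breakpoint: "t \<in> breakpoints \<Longrightarrow> 0 < t \<Longrightarrow> t < T \<Longrightarrow> t \<in> switching_times"
  by (auto simp: breakpoints_def)

text \<open>\<open>\<phi>\<^sub>1\<close> is affine with slope \<open>\<plusminus>2 py\<close> along the arc and keeps its sign there, while
  \<open>\<bar>\<phi>\<^sub>1\<bar> \<le> level\<close> at both ends.\<close>
lemma regular_arc_length_le:
  assumes arc: "regular_arc T lam \<gamma> a b"
  shows "2 * \<bar>py\<bar> * (b - a) \<le> level"
proof -
  have "0 \<le> a" "a < b" "b \<le> T" using regular_arc_bounds[OF arc] by auto
  obtain k where k: "\<bar>k\<bar> = 2 * \<bar>py\<bar>" "\<And>t. t \<in> {a..b} \<Longrightarrow> \<phi> 1 t = \<phi> 1 a + k * (t - a)"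
    using switching_affine[of 1 a b] \<open>0 \<le> a\<close> \<open>a < b\<close> \<open>b \<le> T\<close> regular_arc_switching_nonzero[OF arc]
    by auto
  have "0 \<le> \<phi> 1 a * \<phi> 1 b"
    using \<open>0 \<le> a\<close> \<open>a < b\<close> \<open>b \<le> T\<close> regular_arc_switching_nonzero[OF arc]
    by (intro endpoints_mult_nonneg_if_no_root continuous_on_subset[OF continuous_on_switching]) auto
  moreover have "\<bar>\<phi> 1 a\<bar> \<le> level" "\<bar>\<phi> 1 b\<bar> \<le> level"
    using level_eq[of a] level_eq[of b] \<open>0 \<le> a\<close> \<open>a < b\<close> \<open>b \<le> T\<close> by force+
  ultimately have "\<bar>\<phi> 1 b - \<phi> 1 a\<bar> \<le> level" by (auto simp: zero_le_mult_iff)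
  moreover have "\<phi> 1 b - \<phi> 1 a = k * (b - a)" using k(2)[of b] \<open>a < b\<close> by simp
  ultimately show ?thesis using k(1) \<open>a < b\<close> by (simp add: abs_mult)
qed

text \<open>Both ends of an interior arc are switching times. If \<open>\<phi>\<^sub>i\<close> vanishes at \<open>a\<close>, it cannot vanish
  again at \<open>b\<close>, so there the other switching function vanishes and \<open>\<bar>\<phi>\<^sub>i b\<bar> = level\<close>.\<close>
lemma interior_regular_arc_length:
  assumes arc: "regular_arc T lam \<gamma> a b" and "0 < a" "b < T"
  shows "2 * \<bar>py\<bar> * (b - a) = level"
proof -
  have "a < b" using regular_arc_bounds[OF arc] by simp
  have "a \<in> switching_times" "b \<in> switching_times"
    using arc \<open>0 < a\<close> \<open>b < T\<close> \<open>a < b\<close> by (auto simp: regular_arc_iff intro!: interior_breakpoint)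
  then obtain i where i: "i \<in> {1,2}" "\<phi> i a = 0" by (auto simp: switching_times_def)
  moreover have "\<forall>t\<in>{a<..<b}. \<phi> (3 - i) t \<noteq> 0"
    using i(1) regular_arc_switching_nonzero[OF arc, of "3 - i"] by auto
  moreover have "0 \<le> a" "a \<in> {a..b}" "b \<le> T" using \<open>0 < a\<close> \<open>a < b\<close> \<open>b < T\<close> by auto
  ultimately obtain k where k: "\<bar>k\<bar> = 2 * \<bar>py\<bar>" "\<And>t. t \<in> {a..b} \<Longrightarrow> \<phi> i t = k * (t - a)"
    using switching_through_zero[of i a b a] \<open>a < b\<close> by blast
  have "\<phi> i b \<noteq> 0" using k py_nonzero[OF \<open>a \<in> switching_times\<close>] \<open>a < b\<close> by simp
  then obtain j where "j \<in> {1,2}" "\<phi> j b = 0" "j = 3 - i"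
    using \<open>b \<in> switching_times\<close> i(1) by (auto simp: switching_times_def)
  then have "\<bar>\<phi> i b\<bar> = level"
    using other_switching_at_switching_time[of b j] \<open>b \<in> switching_times\<close> i(1)
    by (auto simp: switching_times_def)
  then show ?thesis using k \<open>a < b\<close> by (simp add: abs_mult)
qed

lemma arc_lengths:
  "\<exists>s>0. \<forall>a b. regular_arc T lam \<gamma> a b \<longrightarrow> b - a \<le> s \<and> (0 < a \<and> b < T \<longrightarrow> b - a = s)"
proof (cases "py = 0")
  case True
  then show ?thesis
    using T_pos level_pos regular_arc_bounds interior_regular_arc_length
    by (intro exI[of _ T]) force
next
  case False
  then show ?thesis
    using level_pos regular_arc_length_le interior_regular_arc_length
    by (intro exI[of _ "level / (2 * \<bar>py\<bar>)"]) (auto simp: field_simps)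
qed

lemma junction_switching_time:
  "regular_arc T lam \<gamma> a t \<Longrightarrow> regular_arc T lam \<gamma> t b \<Longrightarrow> t \<in> switching_times"
  using regular_arc_bounds[of a t] regular_arc_bounds[of t b] by (auto simp: regular_arc_iff intro!: interior_breakpoint)

lemma other_switching_nonzero_across_junction:
  assumes "regular_arc T lam \<gamma> a t" "regular_arc T lam \<gamma> t b" "k \<in> {1,2}" "\<phi> k t = 0"
  shows "\<forall>s\<in>{a<..<b}. \<phi> (3 - k) s \<noteq> 0"
proof
  fix s assume "s \<in> {a<..<b}"
  have "t \<in> {0..T}" using junction_switching_time[OF assms(1,2)] by (simp add: switching_times_def)
  then have "\<phi> (3 - k) t \<noteq> 0"
    using other_switching_at_switching_time[OF _ assms(3,4)] level_pos by force
  moreover have "3 - k \<in> {1,2}" using assms(3) by auto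
  ultimately show "\<phi> (3 - k) s \<noteq> 0"
    using regular_arc_switching_nonzero[OF assms(1)] regular_arc_switching_nonzero[OF assms(2)] \<open>s \<in> {a<..<b}\<close>
    by (cases s t rule: linorder_cases) auto
qed

lemma AE_control_eq_sign:
  assumes "0 \<le> a" "b \<le> T" "j \<in> {1,2}" "\<forall>s\<in>{a<..<b}. sgn (\<phi> j s) = \<rho>" "\<rho> \<noteq> 0"
  shows "AE s in lborel. s \<in> {a<..<b} \<longrightarrow> ucomp j (u s) = \<rho>"
  using AE_control_eq_sgn by eventually_elim (use assms in force)

lemma control_switches_at_junction:
  assumes "regular_arc T lam \<gamma> a t" "regular_arc T lam \<gamma> t b" "k \<in> {1,2}" "\<phi> k t = 0"
  shows "\<exists>\<sigma>\<in>{-1,1::real}. (AE s in lborel. s \<in> {a<..<t} \<longrightarrow> ucomp k (u s) = \<sigma>) \<and>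
                          (AE s in lborel. s \<in> {t<..<b} \<longrightarrow> ucomp k (u s) = - \<sigma>)"
proof -
  have "0 \<le> a" "a < t" "t < b" "b \<le> T"
    using regular_arc_bounds[OF assms(1)] regular_arc_bounds[OF assms(2)] by auto
  obtain c where c: "\<bar>c\<bar> = 2 * \<bar>py\<bar>" "\<And>s. s \<in> {a..b} \<Longrightarrow> \<phi> k s = c * (s - t)"
    using switching_through_zero[OF assms(3), of a b t] \<open>0 \<le> a\<close> \<open>a < t\<close> \<open>t < b\<close> \<open>b \<le> T\<close> assms(4)
      other_switching_nonzero_across_junction[OF assms] by auto
  have "c \<noteq> 0" using c(1) py_nonzero[OF junction_switching_time[OF assms(1,2)]] by simp
  have "sgn (\<phi> k s) = - sgn c" if "s \<in> {a<..<t}" for s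
    using c(2)[of s] that \<open>t < b\<close> by (simp add: sgn_mult)
  moreover have "sgn (\<phi> k s) = sgn c" if "s \<in> {t<..<b}" for s
    using c(2)[of s] that \<open>a < t\<close> by (simp add: sgn_mult)
  moreover have "t \<le> T" "0 \<le> t" "- sgn c \<noteq> 0" "- (- sgn c) \<noteq> 0"
    using \<open>0 \<le> a\<close> \<open>a < t\<close> \<open>t < b\<close> \<open>b \<le> T\<close> \<open>c \<noteq> 0\<close> by (auto simp: sgn_0_0)
  ultimately have "AE s in lborel. s \<in> {a<..<t} \<longrightarrow> ucomp k (u s) = - sgn c"
    "AE s in lborel. s \<in> {t<..<b} \<longrightarrow> ucomp k (u s) = - (- sgn c)"
    using AE_control_eq_sign[OF \<open>0 \<le> a\<close> _ assms(3)] AE_control_eq_sign[OF _ \<open>b \<le> T\<close> assms(3)]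
    by simp_all
  moreover have "- sgn c \<in> {-1, 1}" using \<open>c \<noteq> 0\<close> by (auto simp: sgn_if)
  ultimately show ?thesis by blast
qed

lemma other_control_constant_at_junction:
  assumes "regular_arc T lam \<gamma> a t" "regular_arc T lam \<gamma> t b" "k \<in> {1,2}" "\<phi> k t = 0"
  shows "\<exists>\<rho>\<in>{-1,1::real}. AE s in lborel. s \<in> {a<..<b} \<longrightarrow> ucomp (3 - k) (u s) = \<rho>"
proof -
  have "0 \<le> a" "a < b" "b \<le> T"
    using regular_arc_bounds[OF assms(1)] regular_arc_bounds[OF assms(2)] by auto
  then obtain \<rho> where \<rho>: "\<rho> \<in> {-1, 1}" "\<forall>s\<in>{a<..<b}. sgn (\<phi> (3 - k) s) = \<rho>"
    using sgn_constant_if_no_root[OF continuous_on_subset[OF continuous_on_switching]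
        \<open>a < b\<close> other_switching_nonzero_across_junction[OF assms]] by auto
  moreover have "3 - k \<in> {1,2}" using assms(3) by auto
  ultimately have "AE s in lborel. s \<in> {a<..<b} \<longrightarrow> ucomp (3 - k) (u s) = \<rho>"
    using \<open>0 \<le> a\<close> \<open>b \<le> T\<close> by (intro AE_control_eq_sign) auto
  then show ?thesis using \<rho>(1) by blast
qed

lemma junction_switches_only:
  assumes "junction T lam \<gamma> t"
  shows "\<exists>i\<in>{1,2}. switches_only T lam \<gamma> u i t"
proof -
  have "t \<in> switching_times" using assms junction_switching_time by (auto simp: junction_def)
  then obtain i where i: "i \<in> {1,2}" "\<phi> i t = 0" by (auto simp: switching_times_def)
  have "switches_only T lam \<gamma> u i t"
    unfolding switches_only_def
  proof (intro allI impI conjI)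
    fix a b assume "regular_arc T lam \<gamma> a t \<and> regular_arc T lam \<gamma> t b"
    then show "\<exists>\<sigma>\<in>{-1,1::real}. (AE s in lborel. s \<in> {a<..<t} \<longrightarrow> ucomp i (u s) = \<sigma>) \<and>
                                  (AE s in lborel. s \<in> {t<..<b} \<longrightarrow> ucomp i (u s) = - \<sigma>)"
      and "\<exists>\<rho>\<in>{-1,1::real}. AE s in lborel. s \<in> {a<..<b} \<longrightarrow> ucomp (3 - i) (u s) = \<rho>"
      using control_switches_at_junction[OF _ _ i] other_control_constant_at_junction[OF _ _ i] by auto
  qed
  then show ?thesis using i(1) by blast
qed

lemma switches_only_imp_switching_zero:
  assumes "junction T lam \<gamma> t" "i \<in> {1,2}" "switches_only T lam \<gamma> u i t"
  shows "\<phi> i t = 0"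
proof (rule ccontr)
  assume "\<phi> i t \<noteq> 0"
  obtain a b where arcs: "regular_arc T lam \<gamma> a t" "regular_arc T lam \<gamma> t b"
    using assms(1) by (auto simp: junction_def)
  then have "a < t" "t < b" using regular_arc_bounds by blast+
  obtain k where "k \<in> {1,2}" "\<phi> k t = 0" using junction_switching_time[OF arcs] by (auto simp: switching_times_def)
  with \<open>\<phi> i t \<noteq> 0\<close> assms(2) have "k = 3 - i" by auto
  obtain \<sigma> where "\<sigma> \<in> {-1, 1}"
    and left: "AE s in lborel. s \<in> {a<..<t} \<longrightarrow> ucomp k (u s) = \<sigma>"
    and right: "AE s in lborel. s \<in> {t<..<b} \<longrightarrow> ucomp k (u s) = - \<sigma>"
    using control_switches_at_junction[OF arcs \<open>k \<in> {1,2}\<close> \<open>\<phi> k t = 0\<close>] by blast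
  obtain \<rho> where const: "AE s in lborel. s \<in> {a<..<b} \<longrightarrow> ucomp k (u s) = \<rho>"
    using assms(3) arcs \<open>k = 3 - i\<close> by (auto simp: switches_only_def)
  have "AE s in lborel. s \<in> {a<..<t} \<longrightarrow> \<sigma> = \<rho>"
    using left const by eventually_elim (use \<open>t < b\<close> in auto)
  then have "\<exists>s\<in>{a<..<t}. \<sigma> = \<rho>" using \<open>a < t\<close> by (rule AE_imp_ex_greaterThanLessThan)
  then have "\<sigma> = \<rho>" by blast
  have "AE s in lborel. s \<in> {t<..<b} \<longrightarrow> - \<sigma> = \<rho>"
    using right const by eventually_elim (use \<open>a < t\<close> in auto)
  then have "\<exists>s\<in>{t<..<b}. - \<sigma> = \<rho>" using \<open>t < b\<close> by (rule AE_imp_ex_greaterThanLessThan)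
  then have "- \<sigma> = \<rho>" by blast
  then show False using \<open>\<sigma> = \<rho>\<close> \<open>\<sigma> \<in> {-1, 1}\<close> by auto
qed

lemma regular_arc_between_consecutive_junctions:
  assumes "junction T lam \<gamma> t" "junction T lam \<gamma> t'" "t < t'"
    and no_junction: "\<forall>r\<in>{t<..<t'}. \<not> junction T lam \<gamma> r"
  shows "regular_arc T lam \<gamma> t t'"
proof -
  obtain a b where arcs: "regular_arc T lam \<gamma> a t" "regular_arc T lam \<gamma> t b"
    using assms(1) by (auto simp: junction_def)
  have "t' \<in> switching_times" using assms(2) junction_switching_time by (auto simp: junction_def)
  then have "t' \<in> breakpoints" by (simp add: breakpoints_def)
  then have "b \<le> t'" using arcs(2) \<open>t < t'\<close> by (force simp: regular_arc_iff)
  have "b = t'"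
  proof (rule ccontr)
    assume "b \<noteq> t'"
    then have "b < T" using \<open>b \<le> t'\<close> \<open>t' \<in> switching_times\<close> by (auto simp: switching_times_def)
    then obtain c where "c \<in> breakpoints" "b < c" "{b<..<c} \<inter> breakpoints = {}"
      by (rule next_breakpoint)
    then have "regular_arc T lam \<gamma> b c" using arcs(2) by (simp add: regular_arc_iff)
    then have "junction T lam \<gamma> b" using arcs(2) by (auto simp: junction_def)
    moreover have "b \<in> {t<..<t'}" using \<open>b \<le> t'\<close> \<open>b \<noteq> t'\<close> regular_arc_bounds[OF arcs(2)] by simp
    ultimately show False using no_junction by blast
  qed
  then show ?thesis using arcs(2) by simp
qed

text \<open>The switching function that vanishes at \<open>t\<close> is affine with nonzero slope on the arc from
  \<open>t\<close> to \<open>t'\<close>, hence nonzero at \<open>t'\<close>.\<close>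
lemma consecutive_junctions_switch_distinct:
  assumes "junction T lam \<gamma> t" "junction T lam \<gamma> t'" "t < t'"
    and "\<forall>r\<in>{t<..<t'}. \<not> junction T lam \<gamma> r"
    and "i \<in> {1,2}" "i' \<in> {1,2}" "switches_only T lam \<gamma> u i t" "switches_only T lam \<gamma> u i' t'"
  shows "i \<noteq> i'"
proof
  assume "i = i'"
  have zero: "\<phi> i t = 0" "\<phi> i t' = 0"
    using switches_only_imp_switching_zero assms(1,2,5-8) \<open>i = i'\<close> by blast+
  have arc: "regular_arc T lam \<gamma> t t'"
    using regular_arc_between_consecutive_junctions assms(1-4) .
  have "\<forall>s\<in>{t<..<t'}. \<phi> (3 - i) s \<noteq> 0"
    using \<open>i \<in> {1,2}\<close> regular_arc_switching_nonzero[OF arc, of "3 - i"] by auto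
  moreover have "0 \<le> t" "t' \<le> T" "t \<in> {t..t'}" using regular_arc_bounds[OF arc] by auto
  ultimately obtain k where "\<bar>k\<bar> = 2 * \<bar>py\<bar>" "\<And>s. s \<in> {t..t'} \<Longrightarrow> \<phi> i s = k * (s - t)"
    using switching_through_zero[of i t t' t] \<open>i \<in> {1,2}\<close> \<open>t < t'\<close> zero(1) by blast
  moreover have "t' \<in> switching_times" using assms(2) junction_switching_time by (auto simp: junction_def)
  ultimately have "\<phi> i t' \<noteq> 0" using py_nonzero[of t'] \<open>t < t'\<close> by simp
  then show False using zero(2) by simp
qed

end

theorem mainTheorem7:
  fixes T :: real and lam \<gamma> u :: "real \<Rightarrow> real \<times> real"
  assumes ext: "extremal_pair T lam \<gamma> u"
    and reg: "\<exists>a b. regular_arc T lam \<gamma> a b"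
  shows "regular_bang_bang T lam \<gamma>
    \<and> (\<exists>s>0. \<forall>a b. regular_arc T lam \<gamma> a b \<longrightarrow>
          b - a \<le> s \<and> (0 < a \<and> b < T \<longrightarrow> b - a = s))
    \<and> (\<forall>t. junction T lam \<gamma> t \<longrightarrow> (\<exists>i\<in>{1,2}. switches_only T lam \<gamma> u i t))
    \<and> (\<forall>t t' i i'. junction T lam \<gamma> t \<and> junction T lam \<gamma> t' \<and> t < t'
          \<and> (\<forall>r\<in>{t<..<t'}. \<not> junction T lam \<gamma> r)
          \<and> i \<in> {1,2} \<and> i' \<in> {1,2}
          \<and> switches_only T lam \<gamma> u i t \<and> switches_only T lam \<gamma> u i' t'
          \<longrightarrow> i \<noteq> i')"
proof -
  interpret extremal_with_regular_arc T lam \<gamma> u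
    using ext reg by unfold_locales
  show ?thesis
    using regular_bang_bang arc_lengths junction_switches_only consecutive_junctions_switch_distinct
    by blast
qed

end
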